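(* Let $(P,\le)$ be a poset and $i\in\{1,2,3\}$. If $(x_n)_{n\in\mathbb N}$ is a sequence in $P$ converging to a point $x\in P$ with respect to $\tau^\omega_{O_i}(P)$, then there exists a subsequence $(x_{n_k})_{k\in\mathbb N}$ that O$_i$-converges to $x$.
   Context: For monotone nets, $y_\gamma\uparrow y$ means increasing with supremum $y$, $z_\gamma\downarrow y$ decreasing with infimum $y$; $[a,b]:=\{t:a\le t\le b\}$; directed/filtered sets are nonempty sets in which finite subsets have upper/lower bounds in the set. A net $(x_\gamma)_{\gamma\in\Gamma}$ O$_1$-converges to $x$ if there are nets $(y_\gamma)_{\gamma\in\Gamma}$, $(z_\gamma)_{\gamma\in\Gamma}$ with eventually $y_\gamma\le x_\gamma\le z_\gamma$, $y_\gamma\uparrow x$, $z_\gamma\downarrow x$; it O$_2$-converges to $x$ if there are directed $M$ and filtered $N$ with $\sup M=\inf N=x$ such that for every $(m,n)\in M\times N$ the net is eventually in $[m,n]$; it O$_3$-converges to $x$ if the same holds with $M,N$ arbitrary subsets with $\sup M=\inf N=x$. A subset $X\subseteq P$ is O$^\omega_i$-closed if no sequence in $X$ O$_i$-converges to a point outside $X$; these sets are the closed sets of the topology $\tau^\omega_{O_i}(P)$. *)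

theory Defs
  imports Main
begin

text \<open>The poset P is the whole carrier of a type of class order.\<close>

definition is_lub :: "'a::order set \<Rightarrow> 'a \<Rightarrow> bool" where
  "is_lub S x \<longleftrightarrow> (\<forall>s\<in>S. s \<le> x) \<and> (\<forall>u. (\<forall>s\<in>S. s \<le> u) \<longrightarrow> x \<le> u)"

definition is_glb :: "'a::order set \<Rightarrow> 'a \<Rightarrow> bool" where
  "is_glb S x \<longleftrightarrow> (\<forall>s\<in>S. x \<le> s) \<and> (\<forall>l. (\<forall>s\<in>S. l \<le> s) \<longrightarrow> l \<le> x)"

definition directed_set :: "'a::order set \<Rightarrow> bool" where
  "directed_set M \<longleftrightarrow> M \<noteq> {} \<and> (\<forall>F. finite F \<and> F \<subseteq> M \<longrightarrow> (\<exists>u\<in>M. \<forall>f\<in>F. f \<le> u))"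

definition filtered_set :: "'a::order set \<Rightarrow> bool" where
  "filtered_set N \<longleftrightarrow> N \<noteq> {} \<and> (\<forall>F. finite F \<and> F \<subseteq> N \<longrightarrow> (\<exists>l\<in>N. \<forall>f\<in>F. l \<le> f))"

definition O1_conv :: "(nat \<Rightarrow> 'a::order) \<Rightarrow> 'a \<Rightarrow> bool" where
  "O1_conv s x \<longleftrightarrow> (\<exists>y z. (\<forall>\<^sub>F n in sequentially. y n \<le> s n \<and> s n \<le> z n)
      \<and> mono y \<and> is_lub (range y) x \<and> antimono z \<and> is_glb (range z) x)"

definition O2_conv :: "(nat \<Rightarrow> 'a::order) \<Rightarrow> 'a \<Rightarrow> bool" where
  "O2_conv s x \<longleftrightarrow> (\<exists>M N. directed_set M \<and> filtered_set N \<and> is_lub M x \<and> is_glb N x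
      \<and> (\<forall>m\<in>M. \<forall>n\<in>N. \<forall>\<^sub>F k in sequentially. m \<le> s k \<and> s k \<le> n))"

definition O3_conv :: "(nat \<Rightarrow> 'a::order) \<Rightarrow> 'a \<Rightarrow> bool" where
  "O3_conv s x \<longleftrightarrow> (\<exists>M N. is_lub M x \<and> is_glb N x
      \<and> (\<forall>m\<in>M. \<forall>n\<in>N. \<forall>\<^sub>F k in sequentially. m \<le> s k \<and> s k \<le> n))"

definition O_conv :: "nat \<Rightarrow> (nat \<Rightarrow> 'a::order) \<Rightarrow> 'a \<Rightarrow> bool" where
  "O_conv i s x = (if i = 1 then O1_conv s x else if i = 2 then O2_conv s x else O3_conv s x)"

definition O_omega_closed :: "nat \<Rightarrow> 'a::order set \<Rightarrow> bool" where
  "O_omega_closed i X \<longleftrightarrow> (\<forall>s x. (\<forall>n. s n \<in> X) \<and> O_conv i s x \<longrightarrow> x \<in> X)"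

definition O_omega_open :: "nat \<Rightarrow> 'a::order set \<Rightarrow> bool" where
  "O_omega_open i U \<longleftrightarrow> O_omega_closed i (- U)"

definition tau_O_omega_conv :: "nat \<Rightarrow> (nat \<Rightarrow> 'a::order) \<Rightarrow> 'a \<Rightarrow> bool" where
  "tau_O_omega_conv i s x \<longleftrightarrow>
     (\<forall>U. O_omega_open i U \<and> x \<in> U \<longrightarrow> (\<forall>\<^sub>F n in sequentially. s n \<in> U))"

end

theory Submission
  imports Defs "HOL-Library.Infinite_Set"
begin

(* Suppose no subsequence of s O_i-converges to x. Discarding the terms equal to x and passing
   to a subsequence, we get a subsequence v all of whose subsequences have at most one O_i-limit y,
   apart from the least and greatest elements, which for O_3 are limits of every sequence.
   Since O_i-limits of other points are unique, a constant sequence only converges to its value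
   and a sequence in the range of v has a constant subsequence or is a subsequence of v;
   hence range v together with y and the extremal elements is O^omega_i-closed. Its complement
   is an open neighbourhood of x that v never enters, contradicting convergence in the topology. *)

lemma eventually_subseq:
  assumes "\<forall>\<^sub>F k in sequentially. P k" "strict_mono (r :: nat \<Rightarrow> nat)"
  shows "\<forall>\<^sub>F k in sequentially. P (r k)"
proof -
  obtain N where "\<forall>k\<ge>N. P k" using assms(1) by (auto simp: eventually_sequentially)
  then have "\<forall>k\<ge>N. P (r k)" using strict_mono_imp_increasing[OF assms(2)] le_trans by blast
  then show ?thesis by (auto simp: eventually_sequentially)
qed

lemma strict_mono_subseq_of_finite_fibres:
  fixes f :: "nat \<Rightarrow> nat"
  assumes "\<And>m. finite {n. f n = m}"
  shows "\<exists>g :: nat \<Rightarrow> nat. strict_mono g \<and> strict_mono (f \<circ> g)"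
proof -
  have finite_below: "finite {n. f n \<le> b}" for b
  proof -
    have "{n. f n \<le> b} = (\<Union>m\<in>{..b}. {n. f n = m})" by auto
    then show ?thesis using assms by simp
  qed
  have larger: "\<exists>n. n > k \<and> f n > f k" for k
  proof (rule ccontr)
    assume "\<nexists>n. n > k \<and> f n > f k"
    then have "{k<..} \<subseteq> {n. f n \<le> f k}" by auto
    then show False using finite_below finite_subset infinite_Ioi by blast
  qed
  define next_larger where "next_larger k = (SOME n. n > k \<and> f n > f k)" for k
  have next_larger: "next_larger k > k \<and> f (next_larger k) > f k" for k
    unfolding next_larger_def using someI_ex[OF larger] .
  define g where "g k = (next_larger ^^ k) 0" for k
  have "g (Suc k) = next_larger (g k)" for k unfolding g_def by simp
  then have "strict_mono g" "strict_mono (f \<circ> g)"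
    unfolding strict_mono_Suc_iff using next_larger by simp_all
  then show ?thesis by blast
qed

lemma subsingleton_finite:
  assumes "\<And>a b. a \<in> S \<Longrightarrow> b \<in> S \<Longrightarrow> a = b"
  shows "finite S"
  by (metis assms finite.simps insertI1 subsetI subset_singletonD)

(* With M = {} (resp. N = {}) in the definition of O_3-convergence, a least (resp. greatest)
   element is an O_3-limit of every sequence; these are the only points at which O_i-limits
   can fail to be unique. *)
definition universal_O_limit :: "nat \<Rightarrow> 'a::order \<Rightarrow> bool" where
  "universal_O_limit i z \<longleftrightarrow> i \<noteq> 1 \<and> i \<noteq> 2 \<and> ((\<forall>u. z \<le> u) \<or> (\<forall>u. u \<le> z))"

lemma O_conv_universal_limit:
  assumes "universal_O_limit i z"
  shows "O_conv i s z"
proof -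
  have "is_lub {} z \<and> is_glb {z} z \<or> is_lub {z} z \<and> is_glb {} z"
    using assms unfolding universal_O_limit_def is_lub_def is_glb_def by auto
  then have "O3_conv s z" unfolding O3_conv_def by blast
  then show ?thesis using assms unfolding universal_O_limit_def O_conv_def by simp
qed

lemma finite_universal_O_limits: "finite {z :: 'a::order. universal_O_limit i z}"
proof (rule finite_subset)
  show "{z. universal_O_limit i z} \<subseteq> {z. \<forall>u. z \<le> u} \<union> {z. \<forall>u. u \<le> z}"
    unfolding universal_O_limit_def by auto
  have "finite {z :: 'a. \<forall>u. z \<le> u}" "finite {z :: 'a. \<forall>u. u \<le> z}"
    by (rule subsingleton_finite, metis mem_Collect_eq order.antisym)+
  then show "finite ({z :: 'a. \<forall>u. z \<le> u} \<union> {z. \<forall>u. u \<le> z})" by simp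
qed

definition proper_O3_conv :: "(nat \<Rightarrow> 'a::order) \<Rightarrow> 'a \<Rightarrow> bool" where
  "proper_O3_conv s x \<longleftrightarrow> (\<exists>M N. M \<noteq> {} \<and> N \<noteq> {} \<and> is_lub M x \<and> is_glb N x
      \<and> (\<forall>m\<in>M. \<forall>n\<in>N. \<forall>\<^sub>F k in sequentially. m \<le> s k \<and> s k \<le> n))"

lemma proper_O3_conv_le:
  assumes "proper_O3_conv s a" "proper_O3_conv s b"
  shows "a \<le> b"
proof -
  obtain M N where M: "M \<noteq> {}" "N \<noteq> {}" "is_lub M a"
    and bounds: "\<forall>m\<in>M. \<forall>n\<in>N. \<forall>\<^sub>F k in sequentially. m \<le> s k \<and> s k \<le> n"
    using assms(1) unfolding proper_O3_conv_def by blast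
  obtain M' N' where M': "M' \<noteq> {}" "is_glb N' b"
    and bounds': "\<forall>m\<in>M'. \<forall>n\<in>N'. \<forall>\<^sub>F k in sequentially. m \<le> s k \<and> s k \<le> n"
    using assms(2) unfolding proper_O3_conv_def by blast
  have "m \<le> n" if "m \<in> M" "n \<in> N'" for m n
  proof -
    obtain n0 m0 where "n0 \<in> N" "m0 \<in> M'" using M(2) M'(1) by blast
    then have "\<forall>\<^sub>F k in sequentially. m \<le> s k \<and> s k \<le> n0"
      and "\<forall>\<^sub>F k in sequentially. m0 \<le> s k \<and> s k \<le> n"
      using bounds bounds' that by blast+
    then have "\<forall>\<^sub>F k in sequentially. m \<le> s k \<and> s k \<le> n"
      by eventually_elim simp
    then obtain k where "m \<le> s k" "s k \<le> n" by (auto simp: eventually_sequentially)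
    then show ?thesis by (rule order_trans)
  qed
  then show ?thesis using M(3) M'(2) unfolding is_lub_def is_glb_def by blast
qed

lemma proper_O3_conv_unique: "proper_O3_conv s a \<Longrightarrow> proper_O3_conv s b \<Longrightarrow> a = b"
  by (simp add: order.antisym proper_O3_conv_le)

lemma proper_O3_conv_const: "proper_O3_conv (\<lambda>_. c) c"
  unfolding proper_O3_conv_def is_lub_def is_glb_def
  by (intro exI[of _ "{c}"]) auto

lemma proper_O3_conv_if_O1_conv:
  assumes "O1_conv s z"
  shows "proper_O3_conv s z"
proof -
  obtain y w where between: "\<forall>\<^sub>F n in sequentially. y n \<le> s n \<and> s n \<le> w n"
    and y: "mono y" "is_lub (range y) z" and w: "antimono w" "is_glb (range w) z"
    using assms unfolding O1_conv_def by blast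
  have "\<forall>\<^sub>F k in sequentially. y j \<le> s k \<and> s k \<le> w l" for j l
    using eventually_conj[OF between eventually_ge_at_top[of "max j l"]]
  proof (rule eventually_mono)
    fix k assume "(y k \<le> s k \<and> s k \<le> w k) \<and> k \<ge> max j l"
    moreover have "y j \<le> y k" "w k \<le> w l" using y(1) w(1) calculation
      by (simp_all add: mono_def antimono_def)
    ultimately show "y j \<le> s k \<and> s k \<le> w l" by (meson order_trans)
  qed
  then show ?thesis unfolding proper_O3_conv_def using y(2) w(2) by blast
qed

lemma proper_O3_conv_if_O_conv:
  assumes "O_conv i s z" "\<not> universal_O_limit i z"
  shows "proper_O3_conv s z"
proof -
  consider "i = 1" "O1_conv s z" | "i = 2" "O2_conv s z" | "i \<noteq> 1" "i \<noteq> 2" "O3_conv s z"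
    using assms(1) unfolding O_conv_def by (auto split: if_splits)
  then show ?thesis
  proof cases
    case 1
    then show ?thesis by (simp add: proper_O3_conv_if_O1_conv)
  next
    case 2
    then obtain M N where "directed_set M" "filtered_set N" "is_lub M z" "is_glb N z"
      "\<forall>m\<in>M. \<forall>n\<in>N. \<forall>\<^sub>F k in sequentially. m \<le> s k \<and> s k \<le> n"
      unfolding O2_conv_def by blast
    moreover from this(1,2) have "M \<noteq> {}" "N \<noteq> {}"
      unfolding directed_set_def filtered_set_def by simp_all
    ultimately show ?thesis unfolding proper_O3_conv_def by blast
  next
    case 3
    then obtain M N where "is_lub M z" "is_glb N z"
      "\<forall>m\<in>M. \<forall>n\<in>N. \<forall>\<^sub>F k in sequentially. m \<le> s k \<and> s k \<le> n"
      unfolding O3_conv_def by blast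
    moreover from this(1,2) have "M \<noteq> {}" "N \<noteq> {}"
      using 3 assms(2) unfolding is_lub_def is_glb_def universal_O_limit_def by auto
    ultimately show ?thesis unfolding proper_O3_conv_def by blast
  qed
qed

lemma O_conv_unique:
  assumes "O_conv i s a" "O_conv i s b" "\<not> universal_O_limit i a" "\<not> universal_O_limit i b"
  shows "a = b"
  using assms proper_O3_conv_if_O_conv proper_O3_conv_unique by metis

lemma O_conv_const_limit:
  assumes "O_conv i (\<lambda>_. c) z" "\<not> universal_O_limit i z"
  shows "z = c"
  using assms proper_O3_conv_if_O_conv proper_O3_conv_const proper_O3_conv_unique by metis

lemma O_conv_const: "O_conv i (\<lambda>_. c) c"
proof -
  have lub: "is_lub {c} c" "is_glb {c} c" unfolding is_lub_def is_glb_def by auto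
  have "directed_set {c}" "filtered_set {c}" unfolding directed_set_def filtered_set_def by auto
  moreover have "range (\<lambda>_::nat. c) = {c}" "mono (\<lambda>_::nat. c)" "antimono (\<lambda>_::nat. c)"
    by (auto simp: mono_def antimono_def)
  ultimately have "O1_conv (\<lambda>_. c) c" "O2_conv (\<lambda>_. c) c" "O3_conv (\<lambda>_. c) c"
    unfolding O1_conv_def O2_conv_def O3_conv_def using lub by force+
  then show ?thesis unfolding O_conv_def by simp
qed

lemma is_lub_range_subseq:
  assumes "is_lub (range y) z" "mono y" "strict_mono (r :: nat \<Rightarrow> nat)"
  shows "is_lub (range (y \<circ> r)) z"
  using assms strict_mono_imp_increasing[OF assms(3)] unfolding is_lub_def mono_def
  by (auto, meson order_trans)

lemma is_glb_range_subseq: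
  assumes "is_glb (range w) z" "antimono w" "strict_mono (r :: nat \<Rightarrow> nat)"
  shows "is_glb (range (w \<circ> r)) z"
  using assms strict_mono_imp_increasing[OF assms(3)] unfolding is_glb_def antimono_def
  by (auto, meson order_trans)

lemma O1_conv_subseq:
  assumes "O1_conv s z" "strict_mono r"
  shows "O1_conv (s \<circ> r) z"
proof -
  obtain y w where between: "\<forall>\<^sub>F n in sequentially. y n \<le> s n \<and> s n \<le> w n"
    and y: "mono y" "is_lub (range y) z" and w: "antimono w" "is_glb (range w) z"
    using assms(1) unfolding O1_conv_def by blast
  have "mono r" using assms(2) strict_mono_mono by blast
  then have "mono (y \<circ> r)" "antimono (w \<circ> r)"
    using y(1) w(1) by (simp_all add: mono_def antimono_def)
  moreover have "\<forall>\<^sub>F n in sequentially. (y \<circ> r) n \<le> (s \<circ> r) n \<and> (s \<circ> r) n \<le> (w \<circ> r) n"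
    using eventually_subseq[OF between assms(2)] by simp
  ultimately show ?thesis unfolding O1_conv_def
    using is_lub_range_subseq[OF y(2,1) assms(2)] is_glb_range_subseq[OF w(2,1) assms(2)]
    by blast
qed

lemma eventually_between_subseq:
  assumes "\<forall>m\<in>M. \<forall>n\<in>N. \<forall>\<^sub>F k in sequentially. m \<le> s k \<and> s k \<le> n" "strict_mono r"
  shows "\<forall>m\<in>M. \<forall>n\<in>N. \<forall>\<^sub>F k in sequentially. m \<le> (s \<circ> r) k \<and> (s \<circ> r) k \<le> n"
  using assms eventually_subseq[OF _ assms(2), where P = "\<lambda>k. _ \<le> s k \<and> s k \<le> _"] by simp

lemma O_conv_subseq:
  assumes "O_conv i s z" "strict_mono r"
  shows "O_conv i (s \<circ> r) z"
  using assms O1_conv_subseq eventually_between_subseq[OF _ assms(2)]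
  unfolding O_conv_def O2_conv_def O3_conv_def by (auto split: if_splits) blast+

lemma O_conv_subseq_within:
  assumes "infinite A" "O_conv i t z"
  obtains g where "strict_mono g" "\<forall>n. g n \<in> A" "O_conv i (t \<circ> g) z"
  using infinite_enumerate[OF assms(1)] O_conv_subseq[OF assms(2)] by blast

lemma tau_O_omega_conv_subseq:
  assumes "tau_O_omega_conv i s x" "strict_mono r"
  shows "tau_O_omega_conv i (s \<circ> r) x"
  using assms eventually_subseq unfolding tau_O_omega_conv_def by fastforce

lemma tau_O_omega_conv_closed:
  assumes "tau_O_omega_conv i s x" "O_omega_closed i X" "\<forall>n. s n \<in> X"
  shows "x \<in> X"
proof (rule ccontr)
  assume "x \<notin> X"
  moreover have "O_omega_open i (- X)" unfolding O_omega_open_def using assms(2) by simp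
  ultimately have "\<forall>\<^sub>F n in sequentially. s n \<in> - X"
    using assms(1) unfolding tau_O_omega_conv_def by blast
  then show False using assms(3) by (auto simp: eventually_sequentially)
qed

lemma O_conv_limit_infinite_fibre:
  assumes "infinite {n. t n = c}" "O_conv i t z" "\<not> universal_O_limit i z"
  shows "z = c"
proof -
  obtain g where "\<forall>n. g n \<in> {n. t n = c}" "O_conv i (t \<circ> g) z"
    using O_conv_subseq_within[OF assms(1,2)] by blast
  moreover from this(1) have "t \<circ> g = (\<lambda>_. c)" by auto
  ultimately have "O_conv i (\<lambda>_. c) z" by simp
  then show ?thesis using assms(3) by (rule O_conv_const_limit)
qed

lemma O_conv_limit_in_finite:
  assumes "finite F" "\<forall>n. t n \<in> F" "O_conv i t z" "\<not> universal_O_limit i z"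
  shows "z \<in> F"
proof -
  have "range t \<subseteq> F" using assms(2) by auto
  then have "finite (range t)" using assms(1) by (rule finite_subset)
  then obtain c where "c \<in> range t" "infinite (t -` {c})"
    using infinite_UNIV_nat by (rule inf_img_fin_domE)
  moreover from this(2) have "z = c"
    using O_conv_limit_infinite_fibre[of t c i z] assms(3,4) by (simp add: vimage_def)
  ultimately show ?thesis using assms(2) by auto
qed

lemma O_conv_limit_in_range:
  fixes v :: "nat \<Rightarrow> 'a::order"
  assumes "\<forall>n. t n \<in> range v" "O_conv i t z" "\<not> universal_O_limit i z"
  shows "z \<in> range v \<or> (\<exists>r. strict_mono r \<and> O_conv i (v \<circ> r) z)"
proof -
  have "\<forall>n. \<exists>m. t n = v m" using assms(1) by auto
  then obtain f where "\<forall>n. t n = v (f n)" by metis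
  then have t: "t = v \<circ> f" by auto
  show ?thesis
  proof (cases "\<exists>m. infinite {n. f n = m}")
    case True
    then obtain m where "infinite {n. f n = m}" by blast
    then have "infinite {n. t n = v m}"
      using infinite_super[of "{n. f n = m}" "{n. t n = v m}"] by (auto simp: t)
    then show ?thesis using O_conv_limit_infinite_fibre assms(2,3) by blast
  next
    case False
    then obtain g :: "nat \<Rightarrow> nat" where "strict_mono g" "strict_mono (f \<circ> g)"
      using strict_mono_subseq_of_finite_fibres by blast
    moreover have "O_conv i (v \<circ> (f \<circ> g)) z"
      using O_conv_subseq[OF assms(2) \<open>strict_mono g\<close>] by (simp add: t o_assoc)
    ultimately show ?thesis by blast
  qed
qed

lemma O_omega_closed_range_Un:
  fixes v :: "nat \<Rightarrow> 'a::order"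
  assumes "finite F" "{z. universal_O_limit i z} \<subseteq> F"
    and subseq_limits: "\<And>r z. strict_mono r \<Longrightarrow> O_conv i (v \<circ> r) z \<Longrightarrow> z \<in> F"
  shows "O_omega_closed i (range v \<union> F)"
  unfolding O_omega_closed_def
proof (intro allI impI, elim conjE)
  fix t z assume t: "\<forall>n. t n \<in> range v \<union> F" and conv: "O_conv i t z"
  show "z \<in> range v \<union> F"
  proof (cases "universal_O_limit i z")
    case True
    then show ?thesis using assms(2) by blast
  next
    case False
    have "UNIV = {n. t n \<in> F} \<union> {n. t n \<in> range v}" using t by auto
    then consider "infinite {n. t n \<in> F}" | "infinite {n. t n \<in> range v}"
      by (metis finite_Un infinite_UNIV_nat)
    then show ?thesis
    proof cases
      case 1
      then obtain g where "\<forall>n. (t \<circ> g) n \<in> F" "O_conv i (t \<circ> g) z"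
        using O_conv_subseq_within[OF _ conv] by (metis comp_apply mem_Collect_eq)
      then show ?thesis using O_conv_limit_in_finite assms(1) False by blast
    next
      case 2
      then obtain g where "\<forall>n. (t \<circ> g) n \<in> range v" "O_conv i (t \<circ> g) z"
        using O_conv_subseq_within[OF _ conv] by (metis comp_apply mem_Collect_eq)
      then show ?thesis using O_conv_limit_in_range subseq_limits False by blast
    qed
  qed
qed

(* Y is {y} if some subsequence has a non-universal limit y (unique for all further
   subsequences), and {} otherwise. *)
lemma subseq_with_finitely_many_limits:
  fixes u :: "nat \<Rightarrow> 'a::order"
  obtains r Y where "strict_mono r" "finite Y" "\<forall>y\<in>Y. O_conv i (u \<circ> r) y"
    "\<And>r' z. strict_mono r' \<Longrightarrow> O_conv i (u \<circ> r \<circ> r') z \<Longrightarrow> z \<in> Y \<or> universal_O_limit i z"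
proof (cases "\<exists>r y. strict_mono r \<and> O_conv i (u \<circ> r) y \<and> \<not> universal_O_limit i y")
  case True
  then obtain r y where r: "strict_mono r" "O_conv i (u \<circ> r) y" "\<not> universal_O_limit i y"
    by blast
  have "z \<in> {y} \<or> universal_O_limit i z"
    if "strict_mono r'" "O_conv i (u \<circ> r \<circ> r') z" for r' z
    using O_conv_unique[OF that(2) O_conv_subseq[OF r(2) that(1)]] r(3) by blast
  then show ?thesis using that r(1,2) by blast
next
  case False
  then show ?thesis using that[of id "{}"] by (simp add: strict_mono_on_id o_assoc)
qed

theorem mainTheorem4:
  fixes s :: "nat \<Rightarrow> 'a::order" and x :: 'a and i :: nat
  assumes "i \<in> {1, 2, 3}"
    and "tau_O_omega_conv i s x"
  shows "\<exists>r. strict_mono r \<and> O_conv i (s \<circ> r) x"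
proof (rule ccontr)
  assume no_subseq: "\<nexists>r. strict_mono r \<and> O_conv i (s \<circ> r) x"
  have not_universal: "\<not> universal_O_limit i x"
  proof
    assume "universal_O_limit i x"
    then have "O_conv i (s \<circ> id) x" by (rule O_conv_universal_limit)
    then show False using no_subseq strict_mono_on_id by blast
  qed
  have "finite {n. s n = x}"
  proof (rule ccontr)
    assume "infinite {n. s n = x}"
    then obtain g :: "nat \<Rightarrow> nat" where "strict_mono g" "\<forall>n. s (g n) = x"
      using infinite_enumerate by blast
    moreover from this(2) have "s \<circ> g = (\<lambda>_. x)" by auto
    ultimately show False using no_subseq O_conv_const by metis
  qed
  then have "infinite {n. s n \<noteq> x}" by (simp add: Collect_neg_eq)
  then obtain h :: "nat \<Rightarrow> nat" where h: "strict_mono h" "\<forall>n. s (h n) \<noteq> x"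
    using infinite_enumerate by blast
  obtain r Y where r: "strict_mono r" "finite Y" "\<forall>y\<in>Y. O_conv i (s \<circ> h \<circ> r) y"
    and limits: "\<And>r' z. strict_mono r' \<Longrightarrow> O_conv i (s \<circ> h \<circ> r \<circ> r') z
      \<Longrightarrow> z \<in> Y \<or> universal_O_limit i z"
    using subseq_with_finitely_many_limits[where u = "s \<circ> h" and i = i] by blast
  define v where "v = s \<circ> h \<circ> r"
  have hr: "strict_mono (h \<circ> r)" using h(1) r(1) by (simp add: strict_mono_def)
  then have "x \<notin> Y" using r(3) no_subseq by (auto simp: o_assoc)
  have "O_omega_closed i (range v \<union> (Y \<union> {z. universal_O_limit i z}))"
    using r(2) finite_universal_O_limits limits
    by (intro O_omega_closed_range_Un) (auto simp: v_def)
  moreover have "tau_O_omega_conv i v x"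
    using tau_O_omega_conv_subseq[OF assms(2) hr] by (simp add: v_def o_assoc)
  ultimately have "x \<in> range v \<union> (Y \<union> {z. universal_O_limit i z})"
    using tau_O_omega_conv_closed by blast
  then show False using \<open>x \<notin> Y\<close> not_universal h(2) by (auto simp: v_def)
qed

end
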